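(* Let $x\in\mathbb{R}^d$, $V\subseteq\{1,\dots,d\}$ (of any parity), and let $\theta\in\{\pm1\}^d$ with $\theta_i=1$ for $i\in V$ and $\theta_i=-1$ for $i\notin V$. Let $v = \Pi_{\{w\in\mathbb{R}^d:\theta^\top w = |V|-1\}}(x)$ and suppose $v\notin[0,1]^d$. Then there exists $i\in\{1,\dots,d\}$ such that either ($v_i>1$ and $\theta_i=1$) or ($v_i<0$ and $\theta_i=-1$).
   Context: $\Pi_C(x)$ denotes the Euclidean projection of $x$ onto a closed convex set $C$. *)

theory Defs
  imports "HOL-Analysis.Analysis"
begin

end

theory Submission
  imports Defs
begin

text \<open>Only membership of \<open>v\<close> in the hyperplane matters. Writing
  \<open>\<theta> \<bullet> w = \<Sum>\<^sub>i \<theta>\<^sub>i w\<^sub>i\<close>, the absence of a coordinate as in the conclusion means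
  \<open>\<theta>\<^sub>i w\<^sub>i \<le> [i \<in> V]\<close> for every \<open>i\<close>. These nonnegative slacks sum to
  \<open>|V| - \<theta> \<bullet> w = 1\<close>, so each is at most \<open>1\<close>, which is exactly the missing half of
  \<open>0 \<le> w\<^sub>i \<le> 1\<close>.\<close>

lemma inner_closest_point_hyperplane:
  fixes a x :: "'a::euclidean_space"
  assumes "a \<noteq> 0"
  shows "a \<bullet> closest_point {w. a \<bullet> w = b} x = b"
proof -
  have "a \<bullet> ((b / (a \<bullet> a)) *\<^sub>R a) = b"
    using assms by simp
  then have "{w. a \<bullet> w = b} \<noteq> {}"
    by blast
  then show ?thesis
    using closest_point_in_set[OF closed_hyperplane] by blast
qed

lemma sign_hyperplane_point_in_unit_box:
  fixes \<theta> w :: "real ^ 'd" and V :: "'d set"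
  assumes theta_def: "\<forall>i. \<theta> $ i = (if i \<in> V then 1 else -1)"
    and on_hyperplane: "\<theta> \<bullet> w = real (card V) - 1"
    and half_box: "\<forall>i. (i \<in> V \<longrightarrow> w $ i \<le> 1) \<and> (i \<notin> V \<longrightarrow> 0 \<le> w $ i)"
  shows "0 \<le> w $ i \<and> w $ i \<le> 1"
proof -
  define slack where "slack k = (if k \<in> V then 1 else 0) - \<theta> $ k * w $ k" for k
  have slack_nonneg: "0 \<le> slack k" for k
    using theta_def half_box unfolding slack_def by auto
  have "sum slack UNIV = real (card V) - \<theta> \<bullet> w"
    unfolding slack_def inner_vec_def by (simp add: sum_subtractf sum.If_cases)
  also have "\<dots> = 1"
    using on_hyperplane by simp
  finally have "slack i \<le> 1"
    using member_le_sum[of i UNIV slack] slack_nonneg by simp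
  then show ?thesis
    using theta_def half_box unfolding slack_def by (cases "i \<in> V") auto
qed

theorem theorem3:
  fixes x \<theta> :: "real ^ 'd" and V :: "'d set" and v :: "real ^ 'd"
  assumes theta_def: "\<forall>i. \<theta> $ i = (if i \<in> V then 1 else -1)"
    and v_def: "v = closest_point {w. \<theta> \<bullet> w = real (card V) - 1} x"
    and not_box: "v \<notin> {w. \<forall>i. 0 \<le> w $ i \<and> w $ i \<le> 1}"
  shows "\<exists>i. (v $ i > 1 \<and> \<theta> $ i = 1) \<or> (v $ i < 0 \<and> \<theta> $ i = -1)"
proof (rule ccontr)
  assume no_witness: "\<not> ?thesis"
  have "\<theta> \<noteq> 0"
    using theta_def by (auto simp: vec_eq_iff)
  then have "\<theta> \<bullet> v = real (card V) - 1"
    unfolding v_def by (rule inner_closest_point_hyperplane)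
  moreover have "\<forall>i. (i \<in> V \<longrightarrow> v $ i \<le> 1) \<and> (i \<notin> V \<longrightarrow> 0 \<le> v $ i)"
    using no_witness theta_def by (auto simp: not_less)
  ultimately have "0 \<le> v $ i \<and> v $ i \<le> 1" for i
    using theta_def sign_hyperplane_point_in_unit_box by blast
  with not_box show False
    by simp
qed

end
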